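(* Let $\emptyset\neq A\subseteq L^0(E)$ and $1\le s\le p<\infty$. Then: (1) if $\operatorname{chcd}_pA\neq\emptyset$, then $\operatorname{chcd}_0\operatorname{chcd}_pA=\operatorname{chcd}_0A$; (2) $\operatorname{chcd}_p\operatorname{chcd}_0A=\operatorname{chcd}_pA$; (3) $\operatorname{chcd}_p\operatorname{chcd}_pA=\operatorname{chcd}_pA$; (4) $\operatorname{chcd}_p\operatorname{chcd}_sA=\operatorname{chcd}_pA$; (5) if $\operatorname{chcd}_pA\neq\emptyset$, then $\operatorname{chcd}_s\operatorname{chcd}_pA=\operatorname{chcd}_sA$.
   Context: $E$ is a separable Banach space; $(\Omega,\mathcal F,\mathbb P)$ a complete probability space; $L^0(E)$ the a.s.-classes of $E$-valued random variables, $L^q(E)=\{\xi:\mathbb E|\xi|^q<\infty\}$. $\operatorname{chcd}_0$ is the $0$-Choquet convex decomposable hull operator on subsets of $L^0(E)$: for nonempty $B\subseteq L^0(E)$, $\operatorname{chcd}_0B=\operatorname{cl}_0\operatorname{dec}\operatorname{conv}B$, the closure in probability of the set of finite decompositions $\sum_{i=1}^m1_{C_i}\xi_i$ ($(C_i)$ a measurable partition of $\Omega$) of elements $\xi_i$ of the convex hull of $B$, and $\operatorname{chcd}_0\emptyset=\emptyset$; it is extensive, monotone and idempotent. For $q\in[1,\infty)$ and any $B\subseteq L^0(E)$, the (extended) $q$-Choquet convex decomposable hull is $\operatorname{chcd}_qB:=\operatorname{chcd}_0B\cap L^q(E)$ (for $B\subseteq L^q(E)$ this agrees with $\operatorname{cl}_q\operatorname{dec}\operatorname{conv}B$,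 closure in $L^q$-norm). *)

theory Defs
  imports "HOL-Probability.Probability"
begin

text \<open>Random variables are represented by (Borel) measurable functions; L^0(E) is the set
  of measurable functions, and all sets below are saturated under a.e. equality
  (closures in probability), so working with representatives is harmless.\<close>

definition L0 :: "'a measure \<Rightarrow> ('a \<Rightarrow> 'b::{banach,second_countable_topology}) set" where
  "L0 M = borel_measurable M"

definition Lq :: "'a measure \<Rightarrow> real \<Rightarrow> ('a \<Rightarrow> 'b::{banach,second_countable_topology}) set" where
  "Lq M q = {f \<in> borel_measurable M. integrable M (\<lambda>x. norm (f x) powr q)}"

definition conv_rv :: "('a \<Rightarrow> 'b::real_vector) set \<Rightarrow> ('a \<Rightarrow> 'b) set" where
  "conv_rv B = {f. \<exists>(n::nat) c g. n \<ge> 1 \<and> (\<forall>i<n. c i \<ge> (0::real) \<and> g i \<in> B)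
      \<and> (\<Sum>i<n. c i) = 1 \<and> f = (\<lambda>x. \<Sum>i<n. c i *\<^sub>R g i x)}"

definition dec :: "'a measure \<Rightarrow> ('a \<Rightarrow> 'b::real_vector) set \<Rightarrow> ('a \<Rightarrow> 'b) set" where
  "dec M B = {f. \<exists>(m::nat) C \<xi>. m \<ge> 1 \<and> (\<forall>i<m. C i \<in> sets M \<and> \<xi> i \<in> B)
      \<and> disjoint_family_on C {..<m} \<and> (\<Union>i<m. C i) = space M
      \<and> f = (\<lambda>x. \<Sum>i<m. indicator (C i) x *\<^sub>R \<xi> i x)}"

definition conv_in_prob :: "'a measure \<Rightarrow> (nat \<Rightarrow> 'a \<Rightarrow> 'b::metric_space) \<Rightarrow> ('a \<Rightarrow> 'b) \<Rightarrow> bool" where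
  "conv_in_prob M g f \<longleftrightarrow>
     (\<forall>e>0. (\<lambda>n. measure M {x \<in> space M. e < dist (g n x) (f x)}) \<longlonglongrightarrow> 0)"

definition cl0 :: "'a measure \<Rightarrow> ('a \<Rightarrow> 'b::{banach,second_countable_topology}) set \<Rightarrow> ('a \<Rightarrow> 'b) set" where
  "cl0 M B = {f \<in> L0 M. \<exists>g. (\<forall>n. g n \<in> B) \<and> conv_in_prob M g f}"

definition chcd0 :: "'a measure \<Rightarrow> ('a \<Rightarrow> 'b::{banach,second_countable_topology}) set \<Rightarrow> ('a \<Rightarrow> 'b) set" where
  "chcd0 M B = (if B = {} then {} else cl0 M (dec M (conv_rv B)))"

definition chcd :: "'a measure \<Rightarrow> real \<Rightarrow> ('a \<Rightarrow> 'b::{banach,second_countable_topology}) set \<Rightarrow> ('a \<Rightarrow> 'b) set" where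
  "chcd M q B = chcd0 M B \<inter> Lq M q"

end

theory Submission
  imports Defs
begin

text \<open>The set dec conv A of finite decompositions of convex combinations is closed, up to
  equality on \<Omega>, under convex combinations and under pasting along measurable sets. Both
  properties pass to the closure in probability, since the combined approximating sequences are
  dominated pointwise by the original ones; together with a diagonal argument showing that the
  closure in probability is closed, this makes chcd0 idempotent. Hence every S with
  chcd_q A \<subseteq> S \<subseteq> chcd0 A has chcd_q S = chcd_q A, which gives (2)-(4). For (1), every
  \<xi> \<in> chcd0 A is the limit in probability of the pastings of \<xi> on {|\<xi>| \<le> n} with a fixed
  \<eta> \<in> chcd_p A elsewhere; these lie in chcd_p A. Finally (5) follows from (1).\<close>

lemma dec_sum_indicatorI:
  fixes C :: "'i \<Rightarrow> 'a set"
  assumes "finite I" "I \<noteq> {}" "\<And>i. i \<in> I \<Longrightarrow> C i \<in> sets M" "\<And>i. i \<in> I \<Longrightarrow> \<xi> i \<in> B"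
    "disjoint_family_on C I" "(\<Union>i\<in>I. C i) = space M"
  shows "(\<lambda>x. \<Sum>i\<in>I. indicator (C i) x *\<^sub>R \<xi> i x) \<in> dec M B"
proof -
  obtain h where h: "bij_betw h {..<card I} I"
    using ex_bij_betw_nat_finite[OF assms(1)] by (auto simp: atLeast0LessThan)
  then have inj: "inj_on h {..<card I}" and im: "h ` {..<card I} = I"
    by (auto simp: bij_betw_def)
  then have hI: "h i \<in> I" if "i < card I" for i using that by auto
  have "disjoint_family_on (C \<circ> h) {..<card I}"
    using assms(5) inj im unfolding disjoint_family_on_def inj_on_def by (metis comp_apply imageI)
  moreover have "(\<Union>i<card I. (C \<circ> h) i) = (\<Union>i\<in>h ` {..<card I}. C i)" by simp
  then have "(\<Union>i<card I. (C \<circ> h) i) = space M" using assms(6) im by simp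
  moreover have "(\<lambda>x. \<Sum>i\<in>I. indicator (C i) x *\<^sub>R \<xi> i x)
      = (\<lambda>x. \<Sum>i<card I. indicator ((C \<circ> h) i) x *\<^sub>R (\<xi> \<circ> h) i x)"
    unfolding comp_def by (intro ext sum.reindex_bij_betw[OF h, symmetric])
  moreover have "card I \<ge> 1" using assms(1,2) by (simp add: Suc_le_eq card_gt_0_iff)
  ultimately show ?thesis
    using assms(3,4) hI unfolding dec_def
    by (intro CollectI exI[of _ "card I"] exI[of _ "C \<circ> h"] exI[of _ "\<xi> \<circ> h"]) auto
qed

lemma conv_rvI:
  fixes c :: "'i \<Rightarrow> real"
  assumes "finite I" "I \<noteq> {}" "\<And>i. i \<in> I \<Longrightarrow> c i \<ge> 0" "\<And>i. i \<in> I \<Longrightarrow> g i \<in> B"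
    "(\<Sum>i\<in>I. c i) = 1"
  shows "(\<lambda>x. \<Sum>i\<in>I. c i *\<^sub>R g i x) \<in> conv_rv B"
proof -
  obtain h where h: "bij_betw h {..<card I} I"
    using ex_bij_betw_nat_finite[OF assms(1)] by (auto simp: atLeast0LessThan)
  then have hI: "h i \<in> I" if "i < card I" for i using that by (auto simp: bij_betw_def)
  have "(\<lambda>x. \<Sum>i\<in>I. c i *\<^sub>R g i x) = (\<lambda>x. \<Sum>i<card I. (c \<circ> h) i *\<^sub>R (g \<circ> h) i x)"
    unfolding comp_def by (intro ext sum.reindex_bij_betw[OF h, symmetric])
  moreover have "(\<Sum>i<card I. (c \<circ> h) i) = 1"
    using sum.reindex_bij_betw[OF h, of c] assms(5) by simp
  moreover have "card I \<ge> 1" using assms(1,2) by (simp add: Suc_le_eq card_gt_0_iff)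
  ultimately show ?thesis
    using assms(3,4) hI unfolding conv_rv_def
    by (intro CollectI exI[of _ "card I"] exI[of _ "c \<circ> h"] exI[of _ "g \<circ> h"]) auto
qed

lemma sum_indicator_scaleR_disjoint:
  assumes "finite I" "i \<in> I" "x \<in> C i" "disjoint_family_on C I"
  shows "(\<Sum>j\<in>I. indicator (C j) x *\<^sub>R f j) = (f i :: 'b::real_vector)"
proof -
  have "(\<Sum>j\<in>I. indicator (C j) x *\<^sub>R f j) = (\<Sum>j\<in>{i}. indicator (C j) x *\<^sub>R f j)"
    using assms unfolding disjoint_family_on_def
    by (intro sum.mono_neutral_right) (auto simp: indicator_def)
  then show ?thesis using assms(3) by simp
qed

lemma decE:
  assumes "f \<in> dec M B"
  obtains m :: nat and C \<xi> where "m \<ge> 1" "\<forall>i<m. C i \<in> sets M \<and> \<xi> i \<in> B"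
    "disjoint_family_on C {..<m}" "(\<Union>i<m. C i) = space M"
    "f = (\<lambda>x. \<Sum>i<m. indicator (C i) x *\<^sub>R \<xi> i x)"
  using assms unfolding dec_def by blast

lemma sum_indicator_partitionE:
  fixes \<xi> :: "nat \<Rightarrow> 'a \<Rightarrow> 'b::real_vector"
  assumes "disjoint_family_on C {..<m}" "(\<Union>i<m. C i) = space M" "x \<in> space M"
  obtains i where "i < m" "x \<in> C i" "(\<Sum>j<m. indicator (C j) x *\<^sub>R \<xi> j x) = \<xi> i x"
proof -
  obtain i where i: "i < m" "x \<in> C i" using assms(2,3) by auto
  moreover have "(\<Sum>j<m. indicator (C j) x *\<^sub>R \<xi> j x) = \<xi> i x"
    using i assms(1) by (intro sum_indicator_scaleR_disjoint[where f = "\<lambda>j. \<xi> j x"]) auto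
  ultimately show thesis by (rule that)
qed

lemma conv_rv_combine:
  assumes "\<xi> \<in> conv_rv B" "\<eta> \<in> conv_rv B" "0 \<le> l" "l \<le> 1"
  shows "(\<lambda>x. l *\<^sub>R \<xi> x + (1 - l) *\<^sub>R \<eta> x) \<in> conv_rv B"
proof -
  obtain n1 :: nat and c1 g1 where 1: "n1 \<ge> 1" "\<forall>i<n1. c1 i \<ge> 0 \<and> g1 i \<in> B" "(\<Sum>i<n1. c1 i) = 1"
    "\<xi> = (\<lambda>x. \<Sum>i<n1. c1 i *\<^sub>R g1 i x)" using assms(1) unfolding conv_rv_def by blast
  obtain n2 :: nat and c2 g2 where 2: "n2 \<ge> 1" "\<forall>i<n2. c2 i \<ge> 0 \<and> g2 i \<in> B" "(\<Sum>i<n2. c2 i) = 1"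
    "\<eta> = (\<lambda>x. \<Sum>i<n2. c2 i *\<^sub>R g2 i x)" using assms(2) unfolding conv_rv_def by blast
  define c where "c = case_sum (\<lambda>i. l * c1 i) (\<lambda>j. (1 - l) * c2 j)"
  define g where "g = case_sum g1 g2"
  have "(\<lambda>x. \<Sum>i\<in>{..<n1} <+> {..<n2}. c i *\<^sub>R g i x) \<in> conv_rv B"
    using 1 2 assms(3,4)
    by (intro conv_rvI) (auto simp: c_def g_def sum.Plus sum_distrib_left[symmetric])
  moreover have "(\<lambda>x. \<Sum>i\<in>{..<n1} <+> {..<n2}. c i *\<^sub>R g i x) = (\<lambda>x. l *\<^sub>R \<xi> x + (1 - l) *\<^sub>R \<eta> x)"
    by (simp add: sum.Plus c_def g_def 1(4) 2(4) scaleR_sum_right)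
  ultimately show ?thesis by simp
qed

text \<open>Closure is required only on \<Omega> = space M, the only part of a random variable that
  convergence in probability sees.\<close>

definition rv_convex :: "'a measure \<Rightarrow> ('a \<Rightarrow> 'b::real_vector) set \<Rightarrow> bool" where
  "rv_convex M K \<longleftrightarrow> (\<forall>f\<in>K. \<forall>g\<in>K. \<forall>l::real. 0 \<le> l \<longrightarrow> l \<le> 1 \<longrightarrow>
     (\<exists>h\<in>K. \<forall>x\<in>space M. h x = l *\<^sub>R f x + (1 - l) *\<^sub>R g x))"

definition rv_decomposable :: "'a measure \<Rightarrow> ('a \<Rightarrow> 'b::real_vector) set \<Rightarrow> bool" where
  "rv_decomposable M K \<longleftrightarrow> (\<forall>f\<in>K. \<forall>g\<in>K. \<forall>A\<in>sets M.
     \<exists>h\<in>K. \<forall>x\<in>space M. h x = (if x \<in> A then f x else g x))"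

lemma rv_convex_dec_conv_rv: "rv_convex M (dec M (conv_rv B))"
  unfolding rv_convex_def
proof (intro ballI allI impI)
  fix k1 k2 and l :: real assume k1: "k1 \<in> dec M (conv_rv B)" and k2: "k2 \<in> dec M (conv_rv B)"
    and l: "0 \<le> l" "l \<le> 1"
  obtain m1 :: nat and C \<xi> where 1: "m1 \<ge> 1" "\<forall>i<m1. C i \<in> sets M \<and> \<xi> i \<in> conv_rv B"
    "disjoint_family_on C {..<m1}" "(\<Union>i<m1. C i) = space M"
    "k1 = (\<lambda>x. \<Sum>i<m1. indicator (C i) x *\<^sub>R \<xi> i x)"
    using k1 by (rule decE)
  obtain m2 :: nat and D \<eta> where 2: "m2 \<ge> 1" "\<forall>i<m2. D i \<in> sets M \<and> \<eta> i \<in> conv_rv B"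
    "disjoint_family_on D {..<m2}" "(\<Union>i<m2. D i) = space M"
    "k2 = (\<lambda>x. \<Sum>i<m2. indicator (D i) x *\<^sub>R \<eta> i x)"
    using k2 by (rule decE)
  define I where "I = {..<m1} \<times> {..<m2}"
  define E where "E = (\<lambda>(i, j). C i \<inter> D j)"
  define \<zeta> where "\<zeta> = (\<lambda>(i, j) x. l *\<^sub>R \<xi> i x + (1 - l) *\<^sub>R \<eta> j x)"
  have disj: "disjoint_family_on E I"
    using 1(3) 2(3) unfolding disjoint_family_on_def I_def E_def by fast
  have mem: "(\<lambda>x. \<Sum>p\<in>I. indicator (E p) x *\<^sub>R \<zeta> p x) \<in> dec M (conv_rv B)"
  proof (rule dec_sum_indicatorI[OF _ _ _ _ disj])
    show "finite I" by (simp add: I_def)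
    have "(0, 0) \<in> I" using 1(1) 2(1) by (simp add: I_def)
    then show "I \<noteq> {}" by blast
    show "E p \<in> sets M" "\<zeta> p \<in> conv_rv B" if "p \<in> I" for p
      using that 1(2) 2(2) l by (auto simp: I_def E_def \<zeta>_def intro: conv_rv_combine)
    show "(\<Union>p\<in>I. E p) = space M" using 1(4) 2(4) unfolding I_def E_def by blast
  qed
  have eq: "(\<Sum>p\<in>I. indicator (E p) x *\<^sub>R \<zeta> p x) = l *\<^sub>R k1 x + (1 - l) *\<^sub>R k2 x"
    if x: "x \<in> space M" for x
  proof -
    obtain i where i: "i < m1" "x \<in> C i" "k1 x = \<xi> i x"
      using 1(3,4) x unfolding 1(5) by (rule sum_indicator_partitionE)
    obtain j where j: "j < m2" "x \<in> D j" "k2 x = \<eta> j x"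
      using 2(3,4) x unfolding 2(5) by (rule sum_indicator_partitionE)
    have "(\<Sum>p\<in>I. indicator (E p) x *\<^sub>R \<zeta> p x) = \<zeta> (i, j) x"
      using i j disj by (intro sum_indicator_scaleR_disjoint[where f = "\<lambda>p. \<zeta> p x"]) (auto simp: I_def E_def)
    then show ?thesis using i j by (simp add: \<zeta>_def)
  qed
  show "\<exists>h\<in>dec M (conv_rv B). \<forall>x\<in>space M. h x = l *\<^sub>R k1 x + (1 - l) *\<^sub>R k2 x"
    by (rule bexI[OF _ mem]) (simp add: eq)
qed

lemma rv_decomposable_dec: "rv_decomposable M (dec M B)"
  unfolding rv_decomposable_def
proof (intro ballI)
  fix k1 k2 A assume k1: "k1 \<in> dec M B" and k2: "k2 \<in> dec M B" and A: "A \<in> sets M"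
  obtain m1 :: nat and C \<xi> where 1: "m1 \<ge> 1" "\<forall>i<m1. C i \<in> sets M \<and> \<xi> i \<in> B"
    "disjoint_family_on C {..<m1}" "(\<Union>i<m1. C i) = space M"
    "k1 = (\<lambda>x. \<Sum>i<m1. indicator (C i) x *\<^sub>R \<xi> i x)"
    using k1 by (rule decE)
  obtain m2 :: nat and D \<eta> where 2: "m2 \<ge> 1" "\<forall>i<m2. D i \<in> sets M \<and> \<eta> i \<in> B"
    "disjoint_family_on D {..<m2}" "(\<Union>i<m2. D i) = space M"
    "k2 = (\<lambda>x. \<Sum>i<m2. indicator (D i) x *\<^sub>R \<eta> i x)"
    using k2 by (rule decE)
  define I where "I = {..<m1} <+> {..<m2}"
  define E where "E = case_sum (\<lambda>i. A \<inter> C i) (\<lambda>j. (space M - A) \<inter> D j)"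
  define \<zeta> where "\<zeta> = case_sum \<xi> \<eta>"
  have disj: "disjoint_family_on E I"
    using 1(3) 2(3) unfolding disjoint_family_on_def I_def E_def by (fastforce split: sum.splits)
  have mem: "(\<lambda>x. \<Sum>p\<in>I. indicator (E p) x *\<^sub>R \<zeta> p x) \<in> dec M B"
  proof (rule dec_sum_indicatorI[OF _ _ _ _ disj])
    show "finite I" by (simp add: I_def)
    have "Inl 0 \<in> I" using 1(1) unfolding I_def by (intro InlI) simp
    then show "I \<noteq> {}" by blast
    show "E p \<in> sets M" "\<zeta> p \<in> B" if "p \<in> I" for p
      using that 1(2) 2(2) A by (auto simp: I_def E_def \<zeta>_def)
    have "x \<in> (\<Union>p\<in>I. E p)" if x: "x \<in> space M" for x
    proof -
      obtain i j where "i < m1" "x \<in> C i" "j < m2" "x \<in> D j" using x 1(4) 2(4) by blast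
      then have "(if x \<in> A then Inl i else Inr j) \<in> I" "x \<in> E (if x \<in> A then Inl i else Inr j)"
        using x by (auto simp: I_def E_def)
      then show ?thesis by blast
    qed
    moreover have "E p \<subseteq> space M" if "p \<in> I" for p
      using that 1(2) 2(2) sets.sets_into_space by (fastforce simp: I_def E_def)
    ultimately show "(\<Union>p\<in>I. E p) = space M" by blast
  qed
  have eq: "(\<Sum>p\<in>I. indicator (E p) x *\<^sub>R \<zeta> p x) = (if x \<in> A then k1 x else k2 x)"
    if x: "x \<in> space M" for x
  proof -
    obtain i where i: "i < m1" "x \<in> C i" "k1 x = \<xi> i x"
      using 1(3,4) x unfolding 1(5) by (rule sum_indicator_partitionE)
    obtain j where j: "j < m2" "x \<in> D j" "k2 x = \<eta> j x"
      using 2(3,4) x unfolding 2(5) by (rule sum_indicator_partitionE)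
    have "(\<Sum>p\<in>I. indicator (E p) x *\<^sub>R \<zeta> p x) = \<zeta> (if x \<in> A then Inl i else Inr j) x"
      using i j disj x by (intro sum_indicator_scaleR_disjoint[where f = "\<lambda>p. \<zeta> p x"])
        (auto simp: I_def E_def)
    then show ?thesis using i j by (simp add: \<zeta>_def)
  qed
  show "\<exists>h\<in>dec M B. \<forall>x\<in>space M. h x = (if x \<in> A then k1 x else k2 x)"
    by (rule bexI[OF _ mem]) (simp add: eq)
qed

lemma sets_dist_gt:
  fixes f g :: "'a \<Rightarrow> 'b::{second_countable_topology, metric_space}"
  assumes "f \<in> borel_measurable M" "g \<in> borel_measurable M"
  shows "{x \<in> space M. e < dist (f x) (g x)} \<in> sets M"
proof -
  have [measurable]: "(\<lambda>x. dist (f x) (g x)) \<in> borel_measurable M"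
    using assms by (rule borel_measurable_dist)
  show ?thesis by measurable
qed

lemma measure_tendsto_0_if_subset_Un:
  assumes "prob_space M" "\<And>n. E1 n \<in> sets M" "\<And>n. E2 n \<in> sets M"
    and "\<forall>\<^sub>F n in sequentially. E n \<subseteq> E1 n \<union> E2 n"
    and "(\<lambda>n. measure M (E1 n)) \<longlonglongrightarrow> 0" "(\<lambda>n. measure M (E2 n)) \<longlonglongrightarrow> 0"
  shows "(\<lambda>n. measure M (E n)) \<longlonglongrightarrow> 0"
proof (rule tendsto_sandwich[of "\<lambda>_. 0" _ _ "\<lambda>n. measure M (E1 n) + measure M (E2 n)"])
  interpret prob_space M by fact
  show "\<forall>\<^sub>F n in sequentially. measure M (E n) \<le> measure M (E1 n) + measure M (E2 n)"
    using assms(4)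
  proof (rule eventually_mono)
    fix n assume "E n \<subseteq> E1 n \<union> E2 n"
    then have "measure M (E n) \<le> measure M (E1 n \<union> E2 n)"
      using assms(2,3) by (intro finite_measure_mono) auto
    also have "\<dots> \<le> measure M (E1 n) + measure M (E2 n)"
      using assms(2,3) by (rule measure_Un_le)
    finally show "measure M (E n) \<le> measure M (E1 n) + measure M (E2 n)" .
  qed
  show "(\<lambda>n. measure M (E1 n) + measure M (E2 n)) \<longlonglongrightarrow> 0"
    using tendsto_add[OF assms(5,6)] by simp
qed auto

lemma conv_in_prob_cong:
  assumes "\<And>n x. x \<in> space M \<Longrightarrow> g n x = g' n x" "\<And>x. x \<in> space M \<Longrightarrow> f x = f' x"
  shows "conv_in_prob M g f = conv_in_prob M g' f'"
proof -
  have "{x \<in> space M. e < dist (g n x) (f x)} = {x \<in> space M. e < dist (g' n x) (f' x)}" for e n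
    using assms by auto
  then show ?thesis unfolding conv_in_prob_def by simp
qed

lemma conv_in_prob_const: "conv_in_prob M (\<lambda>n. f) f"
  unfolding conv_in_prob_def by simp

lemma conv_in_prob_dominated:
  fixes a b h :: "nat \<Rightarrow> 'a \<Rightarrow> 'b::{second_countable_topology, metric_space}"
  assumes "prob_space M"
    and "\<And>n. a n \<in> borel_measurable M" "f \<in> borel_measurable M"
    and "\<And>n. b n \<in> borel_measurable M" "g \<in> borel_measurable M"
    and "conv_in_prob M a f" "conv_in_prob M b g" and "\<alpha> \<ge> 0" "\<beta> \<ge> 0"
    and dominated: "\<And>n x. x \<in> space M \<Longrightarrow>
      dist (h n x) (h' x) \<le> \<alpha> * dist (a n x) (f x) + \<beta> * dist (b n x) (g x)"
  shows "conv_in_prob M h h'"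
  unfolding conv_in_prob_def
proof (intro allI impI)
  fix e :: real assume "e > 0"
  define e1 where "e1 = e / 2 / (\<alpha> + 1)"
  define e2 where "e2 = e / 2 / (\<beta> + 1)"
  have "\<alpha> + 1 > 0" "\<beta> + 1 > 0" using assms(8,9) by linarith+
  then have "e1 > 0" "e2 > 0" "(\<alpha> + 1) * e1 = e / 2" "(\<beta> + 1) * e2 = e / 2"
    using \<open>e > 0\<close> by (simp_all add: e1_def e2_def field_simps)
  then have "\<alpha> * e1 < e / 2" "\<beta> * e2 < e / 2" by (simp_all add: algebra_simps)
  show "(\<lambda>n. measure M {x \<in> space M. e < dist (h n x) (h' x)}) \<longlonglongrightarrow> 0"
  proof (rule measure_tendsto_0_if_subset_Un[OF assms(1)])
    show "{x \<in> space M. e1 < dist (a n x) (f x)} \<in> sets M"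
      "{x \<in> space M. e2 < dist (b n x) (g x)} \<in> sets M" for n
      using assms(2-5) by (auto intro: sets_dist_gt)
    show "(\<lambda>n. measure M {x \<in> space M. e1 < dist (a n x) (f x)}) \<longlonglongrightarrow> 0"
      "(\<lambda>n. measure M {x \<in> space M. e2 < dist (b n x) (g x)}) \<longlonglongrightarrow> 0"
      using assms(6,7) \<open>e1 > 0\<close> \<open>e2 > 0\<close> unfolding conv_in_prob_def by auto
    have "{x \<in> space M. e < dist (h n x) (h' x)}
        \<subseteq> {x \<in> space M. e1 < dist (a n x) (f x)} \<union> {x \<in> space M. e2 < dist (b n x) (g x)}" for n
    proof (rule subsetI, rule ccontr)
      fix x assume "x \<in> {x \<in> space M. e < dist (h n x) (h' x)}"
        and "x \<notin> {x \<in> space M. e1 < dist (a n x) (f x)} \<union> {x \<in> space M. e2 < dist (b n x) (g x)}"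
      then have x: "x \<in> space M" "e < dist (h n x) (h' x)"
        and "dist (a n x) (f x) \<le> e1" "dist (b n x) (g x) \<le> e2" by auto
      then have "\<alpha> * dist (a n x) (f x) \<le> \<alpha> * e1" "\<beta> * dist (b n x) (g x) \<le> \<beta> * e2"
        using assms(8,9) by (auto intro: mult_left_mono)
      then show False
        using dominated[OF x(1), of n] x(2) \<open>\<alpha> * e1 < e / 2\<close> \<open>\<beta> * e2 < e / 2\<close> by linarith
    qed
    then show "\<forall>\<^sub>F n in sequentially. {x \<in> space M. e < dist (h n x) (h' x)}
        \<subseteq> {x \<in> space M. e1 < dist (a n x) (f x)} \<union> {x \<in> space M. e2 < dist (b n x) (g x)}"
      by (intro always_eventually allI)
  qed
qed

lemma conv_in_prob_diagonal:
  fixes k :: "nat \<Rightarrow> nat \<Rightarrow> 'a \<Rightarrow> 'b::{second_countable_topology, metric_space}"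
  assumes "prob_space M"
    and "\<And>n m. k n m \<in> borel_measurable M" "\<And>n. h n \<in> borel_measurable M"
    and "f \<in> borel_measurable M"
    and "\<And>n. conv_in_prob M (k n) (h n)" "conv_in_prob M h f"
  obtains r where "conv_in_prob M (\<lambda>n. k n (r n)) f"
proof -
  define F where "F n m = {x \<in> space M. 1 / real (Suc n) < dist (k n m x) (h n x)}" for n m
  have "\<exists>m. measure M (F n m) < 1 / real (Suc n)" for n
  proof -
    have "(\<lambda>m. measure M (F n m)) \<longlonglongrightarrow> 0"
      using assms(5)[of n] unfolding conv_in_prob_def F_def by simp
    then have "\<forall>\<^sub>F m in sequentially. measure M (F n m) < 1 / real (Suc n)"
      by (rule order_tendstoD) simp
    then show ?thesis by (metis eventually_sequentially order_refl)
  qed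
  then obtain r where r: "\<And>n. measure M (F n (r n)) < 1 / real (Suc n)" by metis
  have "conv_in_prob M (\<lambda>n. k n (r n)) f" unfolding conv_in_prob_def
  proof (intro allI impI)
    fix e :: real assume "e > 0"
    then obtain N where N: "1 / real (Suc N) < e / 2"
      by (metis half_gt_zero_iff nat_approx_posE)
    show "(\<lambda>n. measure M {x \<in> space M. e < dist (k n (r n) x) (f x)}) \<longlonglongrightarrow> 0"
    proof (rule measure_tendsto_0_if_subset_Un[OF assms(1)])
      show "F n (r n) \<in> sets M" "{x \<in> space M. e / 2 < dist (h n x) (f x)} \<in> sets M" for n
        unfolding F_def using assms(2-4) by (auto intro: sets_dist_gt)
      show "(\<lambda>n. measure M {x \<in> space M. e / 2 < dist (h n x) (f x)}) \<longlonglongrightarrow> 0"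
        using assms(6) half_gt_zero[OF \<open>e > 0\<close>] unfolding conv_in_prob_def by blast
      show "(\<lambda>n. measure M (F n (r n))) \<longlonglongrightarrow> 0"
      proof (rule tendsto_sandwich[of "\<lambda>_. 0" _ _ "\<lambda>n. 1 / real (Suc n)"])
        show "\<forall>\<^sub>F n in sequentially. measure M (F n (r n)) \<le> 1 / real (Suc n)"
          using r by (simp add: less_imp_le)
        show "(\<lambda>n. 1 / real (Suc n)) \<longlonglongrightarrow> 0" by (rule LIMSEQ_Suc[OF lim_const_over_n])
      qed simp_all
      have "{x \<in> space M. e < dist (k n (r n) x) (f x)}
          \<subseteq> F n (r n) \<union> {x \<in> space M. e / 2 < dist (h n x) (f x)}" if "N \<le> n" for n
      proof
        fix x assume x: "x \<in> {x \<in> space M. e < dist (k n (r n) x) (f x)}"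
        have "1 / real (Suc n) \<le> 1 / real (Suc N)" using that by (simp add: frac_le)
        then have "1 / real (Suc n) < e / 2" using N by linarith
        moreover have "dist (k n (r n) x) (f x) \<le> dist (k n (r n) x) (h n x) + dist (h n x) (f x)"
          by (rule dist_triangle)
        ultimately show "x \<in> F n (r n) \<union> {x \<in> space M. e / 2 < dist (h n x) (f x)}"
          using x unfolding F_def by auto
      qed
      then show "\<forall>\<^sub>F n in sequentially. {x \<in> space M. e < dist (k n (r n) x) (f x)}
          \<subseteq> F n (r n) \<union> {x \<in> space M. e / 2 < dist (h n x) (f x)}"
        unfolding eventually_sequentially by blast
    qed
  qed
  then show thesis by (rule that)
qed

lemma conv_rv_L0: "B \<subseteq> L0 M \<Longrightarrow> conv_rv B \<subseteq> L0 M"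
  unfolding conv_rv_def L0_def by (auto intro!: borel_measurable_sum borel_measurable_scaleR)

lemma dec_L0:
  assumes "B \<subseteq> L0 M" shows "dec M B \<subseteq> L0 M"
proof
  fix f assume "f \<in> dec M B"
  then obtain m :: nat and C \<xi> where *: "\<forall>i<m. C i \<in> sets M \<and> \<xi> i \<in> B"
    "f = (\<lambda>x. \<Sum>i<m. indicator (C i) x *\<^sub>R \<xi> i x)" by (rule decE)
  have "(\<lambda>x. indicator (C i) x *\<^sub>R \<xi> i x) \<in> borel_measurable M" if "i < m" for i
    using * assms that unfolding L0_def by (intro borel_measurable_scaleR borel_measurable_indicator) auto
  then show "f \<in> L0 M" unfolding *(2) L0_def by (intro borel_measurable_sum) simp
qed

lemma cl0_subset_L0: "cl0 M K \<subseteq> L0 M"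
  unfolding cl0_def by auto

lemma cl0E:
  assumes "f \<in> cl0 M K"
  obtains a where "\<forall>n. a n \<in> K" "conv_in_prob M a f" "f \<in> L0 M"
  using assms unfolding cl0_def by blast

lemma cl0_cong:
  assumes "f \<in> L0 M" "g \<in> cl0 M K" "\<And>x. x \<in> space M \<Longrightarrow> f x = g x"
  shows "f \<in> cl0 M K"
  using assms conv_in_prob_cong[of M _ _ f g] unfolding cl0_def by auto

lemma subset_cl0:
  assumes "K \<subseteq> L0 M" shows "K \<subseteq> cl0 M K"
proof
  fix f assume "f \<in> K"
  then show "f \<in> cl0 M K"
    using assms conv_in_prob_const[of M f] unfolding cl0_def by (intro CollectI conjI exI[of _ "\<lambda>n. f"]) auto
qed

lemma cl0_mono: "K \<subseteq> K' \<Longrightarrow> cl0 M K \<subseteq> cl0 M K'"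
  unfolding cl0_def by blast

lemma cl0_cl0_subset:
  assumes "prob_space M" "K \<subseteq> L0 M"
  shows "cl0 M (cl0 M K) \<subseteq> cl0 M K"
proof
  fix f assume "f \<in> cl0 M (cl0 M K)"
  then obtain h where h: "\<forall>n. h n \<in> cl0 M K" "conv_in_prob M h f" "f \<in> L0 M" by (rule cl0E)
  have "\<forall>n. \<exists>a. (\<forall>m. a m \<in> K) \<and> conv_in_prob M a (h n)"
    using h(1) unfolding cl0_def by blast
  then obtain k where k: "\<And>n m. k n m \<in> K" "\<And>n. conv_in_prob M (k n) (h n)" by metis
  obtain r where "conv_in_prob M (\<lambda>n. k n (r n)) f"
  proof (rule conv_in_prob_diagonal[OF assms(1) _ _ _ k(2) h(2)])
    show "k n m \<in> borel_measurable M" "h n \<in> borel_measurable M" for n m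
      using k(1) h(1) assms(2) cl0_subset_L0 unfolding L0_def by blast+
    show "f \<in> borel_measurable M" using h(3) unfolding L0_def .
  qed
  then show "f \<in> cl0 M K"
    unfolding cl0_def using h(3) k(1) by (intro CollectI conjI exI[of _ "\<lambda>n. k n (r n)"]) auto
qed

lemma dist_convex_combination_le:
  fixes a b f g :: "'b::real_normed_vector"
  assumes "0 \<le> l" "l \<le> 1"
  shows "dist (l *\<^sub>R a + (1 - l) *\<^sub>R b) (l *\<^sub>R f + (1 - l) *\<^sub>R g) \<le> l * dist a f + (1 - l) * dist b g"
proof -
  have "dist (l *\<^sub>R a + (1 - l) *\<^sub>R b) (l *\<^sub>R f + (1 - l) *\<^sub>R g) = norm (l *\<^sub>R (a - f) + (1 - l) *\<^sub>R (b - g))"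
    by (simp add: dist_norm algebra_simps)
  also have "\<dots> \<le> norm (l *\<^sub>R (a - f)) + norm ((1 - l) *\<^sub>R (b - g))"
    by (rule norm_triangle_ineq)
  also have "\<dots> = l * dist a f + (1 - l) * dist b g"
    using assms by (simp add: dist_norm)
  finally show ?thesis .
qed

lemma cl0_convex_combination:
  fixes K :: "('a \<Rightarrow> 'b::{banach,second_countable_topology}) set"
  assumes "prob_space M" "K \<subseteq> L0 M" "rv_convex M K" "f \<in> cl0 M K" "g \<in> cl0 M K" "0 \<le> l" "l \<le> 1"
  shows "(\<lambda>x. l *\<^sub>R f x + (1 - l) *\<^sub>R g x) \<in> cl0 M K"
proof -
  obtain a where a: "\<forall>n. a n \<in> K" "conv_in_prob M a f" "f \<in> L0 M" using assms(4) by (rule cl0E)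
  obtain b where b: "\<forall>n. b n \<in> K" "conv_in_prob M b g" "g \<in> L0 M" using assms(5) by (rule cl0E)
  have "\<forall>n. \<exists>k\<in>K. \<forall>x\<in>space M. k x = l *\<^sub>R a n x + (1 - l) *\<^sub>R b n x"
    using assms(3,6,7) a(1) b(1) unfolding rv_convex_def by blast
  then obtain k where k: "\<And>n. k n \<in> K" "\<And>n x. x \<in> space M \<Longrightarrow> k n x = l *\<^sub>R a n x + (1 - l) *\<^sub>R b n x"
    by metis
  have "conv_in_prob M k (\<lambda>x. l *\<^sub>R f x + (1 - l) *\<^sub>R g x)"
  proof (rule conv_in_prob_dominated[OF assms(1) _ _ _ _ a(2) b(2) assms(6)])
    show "a n \<in> borel_measurable M" "b n \<in> borel_measurable M" for n
      using a(1) b(1) assms(2) unfolding L0_def by blast+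
    show "f \<in> borel_measurable M" "g \<in> borel_measurable M" using a(3) b(3) unfolding L0_def by auto
    show "dist (k n x) (l *\<^sub>R f x + (1 - l) *\<^sub>R g x) \<le> l * dist (a n x) (f x) + (1 - l) * dist (b n x) (g x)"
      if "x \<in> space M" for n x
      using k(2)[OF that, of n] dist_convex_combination_le[OF assms(6,7)] by simp
  qed (use assms(7) in simp)
  moreover have "(\<lambda>x. l *\<^sub>R f x + (1 - l) *\<^sub>R g x) \<in> L0 M"
    using a(3) b(3) unfolding L0_def by measurable
  ultimately show ?thesis using k(1) unfolding cl0_def by blast
qed

lemma cl0_paste:
  fixes K :: "('a \<Rightarrow> 'b::{banach,second_countable_topology}) set"
  assumes "prob_space M" "K \<subseteq> L0 M" "rv_decomposable M K" "f \<in> cl0 M K" "g \<in> cl0 M K" "A \<in> sets M"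
  shows "(\<lambda>x. if x \<in> A then f x else g x) \<in> cl0 M K"
proof -
  obtain a where a: "\<forall>n. a n \<in> K" "conv_in_prob M a f" "f \<in> L0 M" using assms(4) by (rule cl0E)
  obtain b where b: "\<forall>n. b n \<in> K" "conv_in_prob M b g" "g \<in> L0 M" using assms(5) by (rule cl0E)
  have "\<forall>n. \<exists>k\<in>K. \<forall>x\<in>space M. k x = (if x \<in> A then a n x else b n x)"
    using assms(3,6) a(1) b(1) unfolding rv_decomposable_def by blast
  then obtain k where k: "\<And>n. k n \<in> K" "\<And>n x. x \<in> space M \<Longrightarrow> k n x = (if x \<in> A then a n x else b n x)"
    by metis
  have "conv_in_prob M k (\<lambda>x. if x \<in> A then f x else g x)"
  proof (rule conv_in_prob_dominated[OF assms(1) _ _ _ _ a(2) b(2), where \<alpha> = 1 and \<beta> = 1])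
    show "a n \<in> borel_measurable M" "b n \<in> borel_measurable M" for n
      using a(1) b(1) assms(2) unfolding L0_def by blast+
    show "f \<in> borel_measurable M" "g \<in> borel_measurable M" using a(3) b(3) unfolding L0_def by auto
    show "dist (k n x) (if x \<in> A then f x else g x) \<le> 1 * dist (a n x) (f x) + 1 * dist (b n x) (g x)"
      if "x \<in> space M" for n x
      using k(2)[OF that, of n] by simp
  qed simp_all
  moreover have "(\<lambda>x. if x \<in> A then f x else g x) \<in> L0 M"
    using a(3) b(3) assms(6) unfolding L0_def by (intro measurable_If_set) auto
  ultimately show ?thesis using k(1) unfolding cl0_def by blast
qed

lemma conv_rv_subset:
  assumes combine: "\<And>f g l. f \<in> T \<Longrightarrow> g \<in> T \<Longrightarrow> 0 \<le> l \<Longrightarrow> l \<le> 1 \<Longrightarrow>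
    (\<lambda>x. l *\<^sub>R f x + (1 - l) *\<^sub>R g x) \<in> T"
  shows "conv_rv T \<subseteq> T"
proof
  have sum_mem: "(\<lambda>x. \<Sum>i<Suc n. c i *\<^sub>R g i x) \<in> T"
    if "\<forall>i<Suc n. 0 \<le> c i \<and> g i \<in> T" "(\<Sum>i<Suc n. c i) = 1" for n c g
    using that
  proof (induction n arbitrary: c)
    case 0
    then show ?case by simp
  next
    case (Suc n)
    define t where "t = c (Suc n)"
    have s: "(\<Sum>i<Suc n. c i) = 1 - t" using Suc.prems(2) unfolding t_def by simp
    have t: "0 \<le> t" "t \<le> 1" using Suc.prems(1) s sum_nonneg[of "{..<Suc n}" c] unfolding t_def by auto
    show ?case
    proof (cases "t = 1")
      case True
      then have "\<forall>i\<in>{..<Suc n}. c i = 0"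
        using s Suc.prems(1) by (subst sum_nonneg_eq_0_iff[symmetric]) auto
      then have "(\<lambda>x. \<Sum>i<Suc (Suc n). c i *\<^sub>R g i x) = g (Suc n)"
        using True unfolding t_def by (intro ext) simp
      then show ?thesis using Suc.prems(1) by simp
    next
      case False
      define c' where "c' i = c i / (1 - t)" for i
      have "(\<Sum>i<Suc n. c' i) = 1" using s False unfolding c'_def sum_divide_distrib[symmetric] by simp
      then have "(\<lambda>x. \<Sum>i<Suc n. c' i *\<^sub>R g i x) \<in> T"
        using Suc.IH[of c'] Suc.prems(1) t False unfolding c'_def by simp
      then have "(\<lambda>x. (1 - t) *\<^sub>R (\<Sum>i<Suc n. c' i *\<^sub>R g i x) + (1 - (1 - t)) *\<^sub>R g (Suc n) x) \<in> T"
        by (rule combine) (use Suc.prems(1) t in auto)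
      moreover have "(1 - t) *\<^sub>R (\<Sum>i<Suc n. c' i *\<^sub>R g i x) = (\<Sum>i<Suc n. c i *\<^sub>R g i x)" for x
        using False unfolding c'_def scaleR_sum_right by (intro sum.cong) auto
      ultimately show ?thesis unfolding t_def by simp
    qed
  qed
  fix f assume "f \<in> conv_rv T"
  then obtain n :: nat and c g where "n \<ge> 1" "\<forall>i<n. c i \<ge> 0 \<and> g i \<in> T"
    "(\<Sum>i<n. c i) = 1" "f = (\<lambda>x. \<Sum>i<n. c i *\<^sub>R g i x)" unfolding conv_rv_def by blast
  then show "f \<in> T" using sum_mem[of "n - 1" c g] by simp
qed

lemma dec_subset:
  assumes "T \<subseteq> L0 M"
    and paste: "\<And>f g A. f \<in> T \<Longrightarrow> g \<in> T \<Longrightarrow> A \<in> sets M \<Longrightarrow> (\<lambda>x. if x \<in> A then f x else g x) \<in> T"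
    and cong: "\<And>f g. f \<in> L0 M \<Longrightarrow> g \<in> T \<Longrightarrow> (\<And>x. x \<in> space M \<Longrightarrow> f x = g x) \<Longrightarrow> f \<in> T"
  shows "dec M T \<subseteq> T"
proof
  fix f assume f: "f \<in> dec M T"
  then obtain m :: nat and C \<xi> where m: "m \<ge> 1" "\<forall>i<m. C i \<in> sets M \<and> \<xi> i \<in> T"
    "disjoint_family_on C {..<m}" "(\<Union>i<m. C i) = space M"
    "f = (\<lambda>x. \<Sum>i<m. indicator (C i) x *\<^sub>R \<xi> i x)" by (rule decE)
  define G where "G j = (\<lambda>x. if x \<in> (\<Union>i<j. C i) then \<Sum>i<j. indicator (C i) x *\<^sub>R \<xi> i x else \<xi> 0 x)" for j
  have "G j \<in> T" if "j \<le> m" for j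
    using that
  proof (induction j)
    case 0
    then show ?case using m(1,2) by (simp add: G_def)
  next
    case (Suc j)
    have "G (Suc j) = (\<lambda>x. if x \<in> C j then \<xi> j x else G j x)"
    proof
      fix x
      show "G (Suc j) x = (if x \<in> C j then \<xi> j x else G j x)"
      proof (cases "x \<in> C j")
        case True
        have "(\<Sum>i<Suc j. indicator (C i) x *\<^sub>R \<xi> i x) = \<xi> j x"
          using True Suc.prems m(3)
          by (intro sum_indicator_scaleR_disjoint[where f = "\<lambda>i. \<xi> i x"])
            (auto intro: disjoint_family_on_mono[rotated])
        then show ?thesis using True by (auto simp: G_def)
      qed (auto simp: G_def less_Suc_eq)
    qed
    then show ?case using paste Suc m(2) by simp
  qed
  moreover have "f x = G m x" if "x \<in> space M" for x
    using that m(4,5) by (auto simp: G_def)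
  ultimately show "f \<in> T" using cong dec_L0[OF assms(1)] f by blast
qed

lemma conv_rv_mono: "B \<subseteq> B' \<Longrightarrow> conv_rv B \<subseteq> conv_rv B'"
  unfolding conv_rv_def by blast

lemma dec_mono: "B \<subseteq> B' \<Longrightarrow> dec M B \<subseteq> dec M B'"
  unfolding dec_def by blast

lemma chcd0_subset_L0: "chcd0 M B \<subseteq> L0 M"
  unfolding chcd0_def using cl0_subset_L0 by auto

lemma chcd0_mono: "B \<subseteq> B' \<Longrightarrow> chcd0 M B \<subseteq> chcd0 M B'"
  unfolding chcd0_def using cl0_mono dec_mono conv_rv_mono by (simp; blast)

lemma subset_chcd0:
  assumes "B \<subseteq> L0 M" shows "B \<subseteq> chcd0 M B"
proof
  fix f assume f: "f \<in> B"
  have "f \<in> conv_rv B"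
    unfolding conv_rv_def using f by (intro CollectI exI[of _ 1] exI[of _ "\<lambda>_. 1"] exI[of _ "\<lambda>_. f"]) auto
  then have "(\<lambda>x. indicator (space M) x *\<^sub>R f x) \<in> dec M (conv_rv B)"
    unfolding dec_def
    by (intro CollectI exI[of _ 1] exI[of _ "\<lambda>_. space M"] exI[of _ "\<lambda>_. f"]) (auto simp: disjoint_family_on_def)
  then have "(\<lambda>x. indicator (space M) x *\<^sub>R f x) \<in> cl0 M (dec M (conv_rv B))"
    using subset_cl0[OF dec_L0[OF conv_rv_L0[OF assms]]] by blast
  then have "f \<in> cl0 M (dec M (conv_rv B))"
    by (rule cl0_cong[rotated]) (use f assms in auto)
  then show "f \<in> chcd0 M B" using f by (auto simp: chcd0_def)
qed

lemma chcd0_subset_cl0: "chcd0 M B \<subseteq> cl0 M (dec M (conv_rv B))"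
  by (simp add: chcd0_def)

lemma chcd0_nonempty_eq: "B \<noteq> {} \<Longrightarrow> chcd0 M B = cl0 M (dec M (conv_rv B))"
  by (simp add: chcd0_def)

lemma cl0_chcd0_subset:
  assumes "prob_space M" "B \<subseteq> L0 M"
  shows "cl0 M (chcd0 M B) \<subseteq> chcd0 M B"
proof (cases "B = {}")
  case True
  then show ?thesis by (simp add: chcd0_def cl0_def)
next
  case False
  then show ?thesis
    using cl0_cl0_subset[OF assms(1) dec_L0[OF conv_rv_L0[OF assms(2)]]] by (simp add: chcd0_nonempty_eq)
qed

lemma chcd0_paste:
  assumes "prob_space M" "B \<subseteq> L0 M" "f \<in> chcd0 M B" "g \<in> chcd0 M B" "A \<in> sets M"
  shows "(\<lambda>x. if x \<in> A then f x else g x) \<in> chcd0 M B"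
proof -
  have "B \<noteq> {}" using assms(3) by (auto simp: chcd0_def)
  then show ?thesis
    using assms(3-5) cl0_paste[OF assms(1) dec_L0[OF conv_rv_L0[OF assms(2)]] rv_decomposable_dec]
    by (simp add: chcd0_nonempty_eq)
qed

lemma chcd0_idem:
  assumes "prob_space M" "B \<subseteq> L0 M"
  shows "chcd0 M (chcd0 M B) = chcd0 M B"
proof (cases "B = {}")
  case True
  then show ?thesis by (simp add: chcd0_def)
next
  case False
  let ?T = "cl0 M (dec M (conv_rv B))"
  have K: "dec M (conv_rv B) \<subseteq> L0 M" using dec_L0[OF conv_rv_L0[OF assms(2)]] .
  have "conv_rv ?T \<subseteq> ?T"
    by (rule conv_rv_subset) (rule cl0_convex_combination[OF assms(1) K rv_convex_dec_conv_rv])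
  moreover have "dec M ?T \<subseteq> ?T"
    using cl0_paste[OF assms(1) K rv_decomposable_dec] cl0_cong
    by (intro dec_subset[OF cl0_subset_L0]) blast+
  ultimately have "dec M (conv_rv ?T) \<subseteq> ?T" using dec_mono by blast
  then have "cl0 M (dec M (conv_rv ?T)) \<subseteq> ?T"
    using cl0_mono cl0_cl0_subset[OF assms(1) K] by blast
  then have "chcd0 M (chcd0 M B) \<subseteq> chcd0 M B"
    using chcd0_subset_cl0[of M ?T] False by (simp add: chcd0_nonempty_eq)
  moreover have "chcd0 M B \<subseteq> chcd0 M (chcd0 M B)" by (rule subset_chcd0[OF chcd0_subset_L0])
  ultimately show ?thesis by blast
qed

lemma chcd_eq_if_between:
  assumes "prob_space M" "A \<subseteq> L0 M" "S \<subseteq> chcd0 M A" "chcd M q A \<subseteq> S"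
  shows "chcd M q S = chcd M q A"
proof -
  have "chcd0 M S \<subseteq> chcd0 M A"
    using chcd0_mono[OF assms(3), of M] chcd0_idem[OF assms(1,2)] by simp
  moreover have "S \<subseteq> chcd0 M S" using assms(3) chcd0_subset_L0 by (intro subset_chcd0) blast
  ultimately show ?thesis using assms(4) unfolding chcd_def by blast
qed

lemma Lq_antimono:
  assumes "prob_space M" "0 \<le> s" "s \<le> p"
  shows "Lq M p \<subseteq> Lq M s"
proof
  interpret prob_space M by fact
  fix f assume "f \<in> Lq M p"
  then have f: "f \<in> borel_measurable M" "integrable M (\<lambda>x. norm (f x) powr p)" unfolding Lq_def by auto
  have "norm (f x) powr s \<le> 1 + norm (f x) powr p" for x
  proof (cases "norm (f x) \<le> 1")
    case True
    then have "norm (f x) powr s \<le> 1" using assms(2) by (intro powr_le1) auto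
    then show ?thesis by (smt (verit) powr_ge_zero)
  next
    case False
    then have "norm (f x) powr s \<le> norm (f x) powr p" using assms(3) by (intro powr_mono) auto
    then show ?thesis by simp
  qed
  then have "AE x in M. norm (norm (f x) powr s) \<le> norm (1 + norm (f x) powr p)"
    by (intro AE_I2) simp
  moreover have "integrable M (\<lambda>x. 1 + norm (f x) powr p)" using f(2) by simp
  moreover have "(\<lambda>x. norm (f x) powr s) \<in> borel_measurable M" using f(1) by measurable
  ultimately have "integrable M (\<lambda>x. norm (f x) powr s)"
    by (rule Bochner_Integration.integrable_bound[rotated 2])
  then show "f \<in> Lq M s" using f(1) unfolding Lq_def by simp
qed

lemma Lq_paste_norm_le:
  assumes "prob_space M" "f \<in> borel_measurable M" "g \<in> Lq M p" "0 \<le> p"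
  shows "(\<lambda>x. if x \<in> {x \<in> space M. norm (f x) \<le> c} then f x else g x) \<in> Lq M p"
    (is "?h \<in> _")
proof -
  interpret prob_space M by fact
  have g: "g \<in> borel_measurable M" "integrable M (\<lambda>x. norm (g x) powr p)"
    using assms(3) unfolding Lq_def by auto
  have h: "?h \<in> borel_measurable M" using assms(2) g(1) by measurable
  have "norm (?h x) powr p \<le> c powr p + norm (g x) powr p" if "x \<in> space M" for x
  proof (cases "norm (f x) \<le> c")
    case True
    then have "norm (f x) powr p \<le> c powr p" using assms(4) by (intro powr_mono2) auto
    then show ?thesis using True that by (smt (verit) powr_ge_zero)
  qed simp
  then have "AE x in M. norm (norm (?h x) powr p) \<le> norm (c powr p + norm (g x) powr p)"
    by (intro AE_I2) simp
  moreover have "integrable M (\<lambda>x. c powr p + norm (g x) powr p)" using g(2) by simp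
  moreover have "(\<lambda>x. norm (?h x) powr p) \<in> borel_measurable M" using h by measurable
  ultimately have "integrable M (\<lambda>x. norm (?h x) powr p)"
    by (rule Bochner_Integration.integrable_bound[rotated 2])
  then show ?thesis using h unfolding Lq_def by simp
qed

lemma conv_in_prob_paste_norm_le:
  assumes "prob_space M" "f \<in> borel_measurable M"
  shows "conv_in_prob M (\<lambda>n x. if x \<in> {x \<in> space M. norm (f x) \<le> real n} then f x else g x) f"
  unfolding conv_in_prob_def
proof (intro allI impI)
  interpret prob_space M by fact
  fix e :: real assume "e > 0"
  define F where "F n = {x \<in> space M. real n < norm (f x)}" for n :: nat
  have F: "F n \<in> sets M" for n unfolding F_def using assms(2) by measurable
  have empty: "(\<Inter>n. F n) = {}"
  proof -
    have "x \<notin> F (nat \<lceil>norm (f x)\<rceil>)" for x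
      unfolding F_def by (simp add: not_less of_nat_ceiling)
    then show ?thesis by blast
  qed
  have "decseq F"
    unfolding decseq_def F_def
  proof (intro allI impI subsetI)
    fix m n :: nat and x assume "m \<le> n" "x \<in> {x \<in> space M. real n < norm (f x)}"
    then have "real m \<le> real n" "real n < norm (f x)" "x \<in> space M" by auto
    then show "x \<in> {x \<in> space M. real m < norm (f x)}" by simp
  qed
  then have "(\<lambda>n. measure M (F n)) \<longlonglongrightarrow> measure M (\<Inter>n. F n)"
    using F by (intro finite_Lim_measure_decseq) auto
  with empty have lim: "(\<lambda>n. measure M (F n)) \<longlonglongrightarrow> 0" by simp
  have le: "measure M {x \<in> space M. e < dist (if x \<in> {x \<in> space M. norm (f x) \<le> real n} then f x else g x) (f x)}
      \<le> measure M (F n)" for n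
    using \<open>e > 0\<close> F by (intro finite_measure_mono) (auto simp: F_def)
  show "(\<lambda>n. measure M {x \<in> space M.
      e < dist (if x \<in> {x \<in> space M. norm (f x) \<le> real n} then f x else g x) (f x)}) \<longlonglongrightarrow> 0"
    by (rule tendsto_sandwich[of "\<lambda>_. 0" _ _ "\<lambda>n. measure M (F n)"]) (use lim le in auto)
qed

lemma chcd0_subset_chcd0_inter_Lq:
  assumes "prob_space M" "B \<subseteq> L0 M" "0 \<le> p" "g \<in> chcd0 M B \<inter> Lq M p"
  shows "chcd0 M B \<subseteq> chcd0 M (chcd0 M B \<inter> Lq M p)"
proof
  let ?S = "chcd0 M B \<inter> Lq M p"
  have S: "?S \<subseteq> L0 M" using chcd0_subset_L0 by blast
  fix f assume f: "f \<in> chcd0 M B"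
  then have fm: "f \<in> borel_measurable M" using chcd0_subset_L0 unfolding L0_def by blast
  define h where "h n = (\<lambda>x. if x \<in> {x \<in> space M. norm (f x) \<le> real n} then f x else g x)" for n :: nat
  have "h n \<in> ?S" for n
  proof
    have "{x \<in> space M. norm (f x) \<le> real n} \<in> sets M" using fm by measurable
    then show "h n \<in> chcd0 M B"
      unfolding h_def using assms(4) f by (intro chcd0_paste[OF assms(1,2)]) auto
    show "h n \<in> Lq M p"
      unfolding h_def using assms(4) by (intro Lq_paste_norm_le[OF assms(1) fm _ assms(3)]) auto
  qed
  then have "\<forall>n. h n \<in> chcd0 M ?S" using subset_chcd0[OF S] by blast
  moreover have "conv_in_prob M h f"
    unfolding h_def using assms(1) fm by (rule conv_in_prob_paste_norm_le)
  moreover have "f \<in> L0 M" using fm unfolding L0_def .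
  ultimately have "f \<in> cl0 M (chcd0 M ?S)" unfolding cl0_def by blast
  then show "f \<in> chcd0 M ?S" using cl0_chcd0_subset[OF assms(1) S] by blast
qed

theorem mainTheorem18:
  fixes M :: "'a measure" and A :: "('a \<Rightarrow> 'b::{banach,second_countable_topology}) set"
    and p s :: real
  assumes "prob_space M" and "complete_measure M"
    and "A \<noteq> {}" and "A \<subseteq> L0 M"
    and "1 \<le> s" and "s \<le> p"
  shows "(chcd M p A \<noteq> {} \<longrightarrow> chcd0 M (chcd M p A) = chcd0 M A)
    \<and> chcd M p (chcd0 M A) = chcd M p A
    \<and> chcd M p (chcd M p A) = chcd M p A
    \<and> chcd M p (chcd M s A) = chcd M p A
    \<and> (chcd M p A \<noteq> {} \<longrightarrow> chcd M s (chcd M p A) = chcd M s A)"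
proof -
  note between = chcd_eq_if_between[OF assms(1,4)]
  have "0 \<le> p" using assms(5,6) by linarith
  have Lq_ps: "Lq M p \<subseteq> Lq M s" by (rule Lq_antimono[OF assms(1)]) (use assms(5,6) in auto)
  have part1: "chcd0 M (chcd M p A) = chcd0 M A" if "chcd M p A \<noteq> {}"
  proof
    show "chcd0 M (chcd M p A) \<subseteq> chcd0 M A"
      using chcd0_mono[of "chcd M p A" "chcd0 M A" M] chcd0_idem[OF assms(1,4)] by (simp add: chcd_def)
    show "chcd0 M A \<subseteq> chcd0 M (chcd M p A)"
      using that chcd0_subset_chcd0_inter_Lq[OF assms(1,4) \<open>0 \<le> p\<close>] unfolding chcd_def by blast
  qed
  show ?thesis
  proof (intro conjI impI)
    show "chcd0 M (chcd M p A) = chcd0 M A" if "chcd M p A \<noteq> {}" using that by (rule part1)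
    show "chcd M p (chcd0 M A) = chcd M p A" by (rule between) (auto simp: chcd_def)
    show "chcd M p (chcd M p A) = chcd M p A" by (rule between) (auto simp: chcd_def)
    show "chcd M p (chcd M s A) = chcd M p A" by (rule between) (use Lq_ps in \<open>auto simp: chcd_def\<close>)
    show "chcd M s (chcd M p A) = chcd M s A" if "chcd M p A \<noteq> {}"
      using part1[OF that] by (simp add: chcd_def)
  qed
qed

end
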